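(* Let $p$ be a prime with $p \equiv \pm 3 \pmod{10}$, and let $G = \mathrm{PSL}(2,p^2)$. If $m(G) = 3$, then $G$ fails the replacement property.
   Context: For a finite group $G$, a finite sequence $s=(g_1,\dots,g_k)$ of elements of $G$ is an irredundant generating sequence if $\langle g_1,\dots,g_k\rangle = G$ and $g_i \notin \langle g_j : j \neq i\rangle$ for every $i$. $m(G)$ denotes the maximal length of an irredundant generating sequence of $G$. An irredundant generating sequence $s=(g_1,\dots,g_k)$ satisfies the replacement property if for every nontrivial $g \in G$ there is an index $i$ such that $(g_1,\dots,g_{i-1},g,g_{i+1},\dots,g_k)$ generates $G$ (not necessarily irredundantly). $G$ satisfies the replacement property if every irredundant generating sequence of length $m(G)$ satisfies it; $G$ fails the replacement property otherwise. *)

theory Defs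
  imports "HOL-Analysis.Analysis" "HOL-Algebra.Algebra"
begin

definition irredundant_gen_seq :: "('a, 'b) monoid_scheme \<Rightarrow> 'a list \<Rightarrow> bool" where
  "irredundant_gen_seq G s \<longleftrightarrow>
     set s \<subseteq> carrier G \<and>
     generate G (set s) = carrier G \<and>
     (\<forall>i < length s. s ! i \<notin> generate G {s ! j | j. j < length s \<and> j \<noteq> i})"

definition max_irr_len :: "('a, 'b) monoid_scheme \<Rightarrow> nat" where
  "max_irr_len G = Max {length s | s. irredundant_gen_seq G s}"

definition seq_replacement :: "('a, 'b) monoid_scheme \<Rightarrow> 'a list \<Rightarrow> bool" where
  "seq_replacement G s \<longleftrightarrow>
     (\<forall>g \<in> carrier G. g \<noteq> \<one>\<^bsub>G\<^esub> \<longrightarrow>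
        (\<exists>i < length s. generate G (set (s[i := g])) = carrier G))"

definition replacement_property :: "('a, 'b) monoid_scheme \<Rightarrow> bool" where
  "replacement_property G \<longleftrightarrow>
     (\<forall>s. irredundant_gen_seq G s \<and> length s = max_irr_len G \<longrightarrow> seq_replacement G s)"

definition SL2 :: "('a::field ^ 2 ^ 2) monoid" where
  "SL2 = \<lparr>carrier = {A. det A = 1}, mult = (**), one = mat 1\<rparr>"

definition PSL2 :: "('a::field ^ 2 ^ 2) set monoid" where
  "PSL2 = SL2 Mod {mat 1, - mat 1}"

end

theory Submission
  imports Defs "HOL-Number_Theory.Residues"
begin

(* Let q = p^2. As p is odd, 4 divides q - 1, so GF(q) contains a square root i of -1; let w generate
   GF(q)^*. The images in PSL(2,q) of x = [[1,1],[0,1]], y = [[1,0],[1,1]] and h = diag(w, 1/w)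
   generate (conjugating x and y by powers of h gives all unitriangular matrices whose entry is a
   square, hence any entry as a difference of two squares). Each of them lies outside a subgroup
   containing the other two: the lower triangular matrices, the upper triangular ones, and the
   scalar multiples of matrices over the prime field GF(p) (h is not of this form, since otherwise
   w^2, and with it every square and every element of GF(q), would lie in GF(p)). So (x, y, h) is
   irredundant, of maximal length 3 = m(G). The nontrivial element diag(i, -i) lies in all three
   subgroups, so it cannot replace any entry. The congruence p = +-3 mod 10 enters only through
   the oddness of p. *)

section \<open>Finite fields\<close>

lemma card_Ints_eq_CHAR:
  assumes "CHAR('a::ring_1) > 0"
  shows "card (\<int> :: 'a set) = CHAR('a)"
proof -
  define c where "c = int CHAR('a)"
  have c: "c > 0" using assms by (simp add: c_def)
  have "(\<int> :: 'a set) = of_int ` {0..<c}"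
  proof (intro equalityI subsetI)
    fix x :: 'a assume "x \<in> \<int>"
    then obtain z where "x = of_int z" by (auto elim: Ints_cases)
    moreover have "(of_int z :: 'a) = of_int (z mod c)"
      by (simp add: of_int_eq_iff_cong_CHAR c_def[symmetric])
    ultimately show "x \<in> of_int ` {0..<c}" using c by auto
  qed auto
  moreover have "inj_on (of_int :: int \<Rightarrow> 'a) {0..<c}"
  proof (rule inj_onI)
    fix m n assume mn: "m \<in> {0..<c}" "n \<in> {0..<c}" and "(of_int m :: 'a) = of_int n"
    hence "[m = n] (mod c)" by (simp add: of_int_eq_iff_cong_CHAR c_def)
    thus "m = n" using mn by (intro cong_less_imp_eq_int) auto
  qed
  ultimately have "card (\<int> :: 'a set) = card {0..<c}" by (metis card_image)
  thus ?thesis by (simp add: c_def)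
qed

lemma CHAR_eq_prime_of_card:
  assumes "CARD('a::{field,finite}) = p ^ n" "Factorial_Ring.prime p" "n > 0"
  shows "CHAR('a) = p"
proof -
  have "Factorial_Ring.prime CHAR('a)" by (rule prime_CHAR_semidom[OF finite_imp_CHAR_pos]) simp
  moreover have "CHAR('a) dvd p ^ n" using CHAR_dvd_CARD assms(1) by metis
  ultimately show ?thesis using assms(2) prime_dvd_power primes_dvd_imp_eq by blast
qed

lemma Ints_inverse:
  assumes "x \<in> (\<int> :: 'a::{field,finite} set)"
  shows "inverse x \<in> \<int>"
proof (cases "x = 0")
  case False
  have "(\<lambda>y. x * y) ` \<int> = (\<int> :: 'a set)"
    using assms False by (intro endo_inj_surj) (auto intro: inj_onI)
  then obtain y where "y \<in> \<int>" "x * y = 1" by (metis Ints_1 imageE)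
  thus ?thesis using False by (metis inverse_unique)
qed simp

lemma diff_squares_eq:
  fixes t :: "'a::field"
  assumes "(2::'a) \<noteq> 0"
  shows "t = ((t + 1) / 2)\<^sup>2 - ((t - 1) / 2)\<^sup>2"
proof -
  define h where "h = inverse (2::'a)"
  have "((t + 1) * h)\<^sup>2 - ((t - 1) * h)\<^sup>2 = t * (2 * h)\<^sup>2"
    by (simp add: power2_eq_square algebra_simps)
  moreover have "2 * h = 1" using assms by (simp add: h_def)
  ultimately show ?thesis by (simp only: h_def divide_inverse power_one mult_1_right)
qed

lemma Ints_eq_UNIV_if_squares:
  assumes "(2::'a::field) \<noteq> 0" "\<And>x::'a. x\<^sup>2 \<in> \<int>"
  shows "(\<int> :: 'a set) = UNIV"
  using assms diff_squares_eq by (metis Ints_diff UNIV_eq_I)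

lemma finite_field_generator:
  obtains w :: "'a::{field,finite}" where "w \<noteq> 0" "\<And>x. x \<noteq> 0 \<Longrightarrow> \<exists>n. x = w ^ n"
    "\<And>k. w ^ k = 1 \<longleftrightarrow> (CARD('a) - 1) dvd k"
proof -
  \<comment> \<open>the field viewed as a HOL-Algebra ring, where the multiplicative group is known to be cyclic\<close>
  define F :: "'a ring" where
    "F = \<lparr>carrier = UNIV, monoid.mult = (*), one = 1, ring.zero = 0, add = (+)\<rparr>"
  have pow_F: "x [^]\<^bsub>F\<^esub> (n::nat) = x ^ n" for x :: 'a and n
    by (induct n) (simp_all add: F_def mult.commute)
  have "\<exists>y. x * y = 1" if "x \<noteq> 0" for x :: 'a
    using that by (intro exI[of _ "inverse x"]) simp
  then interpret F: field F
    unfolding F_def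
    by unfold_locales (auto simp: algebra_simps Units_def intro: add.right_inverse)
  interpret G: group "Multiplicative_Group.mult_of F" by (rule F.field_mult_group)
  obtain w where w: "w \<in> carrier (Multiplicative_Group.mult_of F)"
    and gen: "carrier (Multiplicative_Group.mult_of F) = {w [^]\<^bsub>F\<^esub> n | n. n \<in> (UNIV :: nat set)}"
    using F.finite_field_mult_group_has_gen by (auto simp: F_def)
  have car: "carrier (Multiplicative_Group.mult_of F) = UNIV - {0}" by (simp add: F_def)
  have pow_G: "w [^]\<^bsub>Multiplicative_Group.mult_of F\<^esub> (n::nat) = w ^ n" for n
    using Multiplicative_Group.nat_pow_mult_of[of F] pow_F by metis
  have one: "\<one>\<^bsub>F\<^esub> = 1" by (simp add: F_def)
  have fin: "finite (carrier (Multiplicative_Group.mult_of F))" by (simp add: car)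
  have "generate (Multiplicative_Group.mult_of F) {w} = carrier (Multiplicative_Group.mult_of F)"
    using G.generate_pow_nat[OF w] G.ord_ge_1[OF fin w] gen by (simp add: pow_G pow_F)
  hence ord: "G.ord w = CARD('a) - 1"
    using G.generate_pow_card[OF w] by (simp add: car card_Diff_singleton F_def)
  show ?thesis
  proof (rule that)
    show "w \<noteq> 0" using w by (simp add: F_def)
    show "\<exists>n. x = w ^ n" if "x \<noteq> 0" for x using that gen car by (auto simp: pow_F)
    show "w ^ k = 1 \<longleftrightarrow> (CARD('a) - 1) dvd k" for k
      using G.pow_eq_id[OF w, of k] by (simp add: pow_G ord one)
  qed
qed

lemma finite_field_sqrt_minus_one:
  assumes "4 dvd CARD('a) - 1"
  obtains i :: "'a::{field,finite}" where "i * i = -1"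
proof -
  define N where "N = CARD('a) - 1"
  obtain w :: 'a where w: "\<And>k. w ^ k = 1 \<longleftrightarrow> N dvd k"
    unfolding N_def using finite_field_generator by metis
  obtain r where r: "N = 4 * r" using assms N_def by blast
  have "CARD('a) \<ge> 2" using card_mono[of UNIV "{0, 1 :: 'a}"] by simp
  hence "r > 0" using r N_def by simp
  define z where "z = w ^ (2 * r)"
  have "z * z = w ^ (4 * r)" unfolding z_def by (simp flip: power_add)
  also have "\<dots> = 1" by (simp add: w r)
  finally have "z * z = 1" .
  moreover have "z \<noteq> 1"
  proof
    assume "z = 1"
    hence "4 * r dvd 2 * r" using w r by (simp add: z_def)
    thus False using \<open>r > 0\<close> by (auto dest: dvd_imp_le)
  qed
  ultimately have "(z + 1) * (z - 1) = 0" "z - 1 \<noteq> 0" by (simp_all add: algebra_simps)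
  hence "z = -1" by (simp add: eq_neg_iff_add_eq_0)
  hence "w ^ r * w ^ r = -1" by (simp add: z_def flip: power_add mult_2)
  thus thesis by (rule that)
qed

lemma two_ne_zero_if_odd_CHAR:
  assumes "odd CHAR('a::field)"
  shows "(2::'a) \<noteq> 0"
proof
  assume "(2::'a) = 0"
  hence "CHAR('a) dvd 2" using of_nat_eq_0_iff_char_dvd[of 2, where 'a='a] by simp
  hence "CHAR('a) \<le> 2" "CHAR('a) > 0"
    using dvd_imp_le[of "CHAR('a)" 2] dvd_pos_nat[of 2 "CHAR('a)"] by simp_all
  thus False using assms CHAR_not_1[where 'a='a] by presburger
qed

lemma Ints_ne_UNIV_if_card_prime_square:
  assumes "CARD('a::{field,finite}) = p\<^sup>2" "Factorial_Ring.prime p"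
  shows "(\<int> :: 'a set) \<noteq> UNIV"
proof
  assume "(\<int> :: 'a set) = UNIV"
  hence "p = p\<^sup>2"
    using card_Ints_eq_CHAR[where 'a='a] CHAR_eq_prime_of_card[OF assms] assms(1) prime_gt_0_nat[OF assms(2)]
    by simp
  thus False using prime_gt_1_nat[OF assms(2)] by (simp add: power2_eq_square)
qed

lemma four_dvd_square_minus_one: "odd (p::nat) \<Longrightarrow> 4 dvd p\<^sup>2 - 1"
proof -
  assume "odd p"
  then obtain m where "p = 2 * m + 1" using oddE by blast
  hence "p\<^sup>2 - 1 = 4 * (m * m + m)" by (simp add: power2_eq_square algebra_simps)
  thus ?thesis by simp
qed

section \<open>Separating subgroups\<close>

definition separating_subgroups ::
    "('a, 'b) monoid_scheme \<Rightarrow> 'a list \<Rightarrow> (nat \<Rightarrow> 'a set) \<Rightarrow> bool" where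
  "separating_subgroups G s H \<longleftrightarrow>
     (\<forall>k < length s. subgroup (H k) G \<and> s ! k \<notin> H k \<and>
        (\<forall>j < length s. j \<noteq> k \<longrightarrow> s ! j \<in> H k))"

lemma irredundant_gen_seqI:
  assumes G: "group G" and s: "set s \<subseteq> carrier G" "generate G (set s) = carrier G"
    and H: "separating_subgroups G s H"
  shows "irredundant_gen_seq G s"
proof -
  have "s ! k \<notin> generate G {s ! j | j. j < length s \<and> j \<noteq> k}" if k: "k < length s" for k
  proof -
    have "{s ! j | j. j < length s \<and> j \<noteq> k} \<subseteq> H k"
      using H k by (auto simp: separating_subgroups_def)
    moreover have "subgroup (H k) G" using H k by (simp add: separating_subgroups_def)
    ultimately have "generate G {s ! j | j. j < length s \<and> j \<noteq> k} \<subseteq> H k"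
      by (rule group.generate_subgroup_incl[OF G])
    thus ?thesis using H k by (auto simp: separating_subgroups_def)
  qed
  thus ?thesis using s by (simp add: irredundant_gen_seq_def)
qed

lemma not_seq_replacementI:
  assumes G: "group G" and s: "set s \<subseteq> carrier G" and H: "separating_subgroups G s H"
    and g: "g \<in> carrier G" "g \<noteq> \<one>\<^bsub>G\<^esub>" "\<And>k. k < length s \<Longrightarrow> g \<in> H k"
  shows "\<not> seq_replacement G s"
proof
  assume "seq_replacement G s"
  then obtain k where k: "k < length s" and gen: "generate G (set (s[k := g])) = carrier G"
    using g by (auto simp: seq_replacement_def)
  have "set (s[k := g]) \<subseteq> H k"
  proof
    fix x assume "x \<in> set (s[k := g])"
    then obtain j where "j < length s" "x = s[k := g] ! j" by (auto simp: in_set_conv_nth)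
    thus "x \<in> H k" using H k g(3) by (cases "j = k") (auto simp: separating_subgroups_def)
  qed
  moreover have "subgroup (H k) G" using H k by (simp add: separating_subgroups_def)
  ultimately have "carrier G \<subseteq> H k" using gen group.generate_subgroup_incl[OF G] by metis
  moreover have "s ! k \<in> carrier G" using s k by auto
  ultimately show False using H k by (auto simp: separating_subgroups_def)
qed

section \<open>SL(2) and PSL(2) over a field\<close>

definition mat2 :: "'a \<Rightarrow> 'a \<Rightarrow> 'a \<Rightarrow> 'a \<Rightarrow> 'a::field^2^2" where
  "mat2 a b c d = (\<chi> i j. if i = 1 then (if j = 1 then a else b) else (if j = 1 then c else d))"

lemma mat2_nth [simp]:
  "mat2 a b c d $ 1 $ 1 = a" "mat2 a b c d $ 1 $ 2 = b" "mat2 a b c d $ 2 $ 1 = c" "mat2 a b c d $ 2 $ 2 = d"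
  by (simp_all add: mat2_def)

lemma mat2_cases:
  obtains a b c d where "(A::'a::field^2^2) = mat2 a b c d"
  by (rule that[of "A$1$1" "A$1$2" "A$2$1" "A$2$2"]) (simp add: vec_eq_iff forall_2)

lemma mat2_eq_iff [simp]: "mat2 a b c d = mat2 a' b' c' d' \<longleftrightarrow> a = a' \<and> b = b' \<and> c = c' \<and> d = d'"
  by (auto simp add: vec_eq_iff forall_2)

lemma mat2_mult [simp]:
  "mat2 a b c d ** mat2 e f g h = mat2 (a*e+b*g) (a*f+b*h) (c*e+d*g) (c*f+d*h)"
  by (simp add: vec_eq_iff forall_2 matrix_matrix_mult_def sum_2)

lemma det_mat2 [simp]: "det (mat2 a b c d) = a * d - b * c"
  by (simp add: det_2)

lemma mat_1_eq_mat2: "(mat 1 :: 'a::field^2^2) = mat2 1 0 0 1"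
  by (simp add: vec_eq_iff forall_2 mat_def)

lemma uminus_mat2 [simp]: "- mat2 a b c d = mat2 (-a) (-b) (-c) (-d)"
  by (simp add: vec_eq_iff forall_2)

lemma SL2_simps [simp]: "carrier SL2 = {A. det A = 1}" "mult SL2 = (**)" "one SL2 = mat 1"
  by (simp_all add: SL2_def)

lemma inv_mat2_mult_eq_1:
  "a * d - b * c = 1 \<Longrightarrow> mat2 d (-b) (-c) a ** mat2 a b c d = (mat 1 :: 'a::field^2^2)"
  by (simp add: mat_1_eq_mat2 algebra_simps)

lemma group_SL2: "group (SL2 :: ('a::field^2^2) monoid)"
proof (rule groupI)
  show "\<exists>B\<in>carrier SL2. B \<otimes>\<^bsub>SL2\<^esub> A = \<one>\<^bsub>SL2\<^esub>" if "A \<in> carrier SL2" for A :: "'a^2^2"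
  proof -
    obtain a b c d where A: "A = mat2 a b c d" by (rule mat2_cases)
    hence det: "a * d - b * c = 1" using that by simp
    have "mat2 d (-b) (-c) a ** A = mat 1" using inv_mat2_mult_eq_1[OF det] A by simp
    moreover have "det (mat2 d (-b) (-c) a) = 1" using det by (simp add: algebra_simps)
    ultimately show ?thesis
      by (intro bexI[of _ "mat2 d (-b) (-c) a"]) (simp_all only: SL2_simps mem_Collect_eq)
  qed
qed (auto simp: det_mul matrix_mul_assoc)

lemma inv_SL2_mat2:
  assumes "a * d - b * c = (1::'a::field)"
  shows "inv\<^bsub>SL2\<^esub> (mat2 a b c d) = mat2 d (-b) (-c) a"
  using assms inv_mat2_mult_eq_1[OF assms]
  by (intro group.inv_equality[OF group_SL2]) (simp_all add: algebra_simps)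

lemma SL2_subgroupI:
  assumes det: "\<And>a b c d. mat2 a b c d \<in> T \<Longrightarrow> a * d - b * c = 1"
    and one: "mat2 1 0 0 1 \<in> T"
    and inv: "\<And>a b c d. mat2 a b c d \<in> T \<Longrightarrow> mat2 d (-b) (-c) a \<in> T"
    and mult: "\<And>A B. A \<in> T \<Longrightarrow> B \<in> T \<Longrightarrow> A ** B \<in> T"
  shows "subgroup T (SL2 :: ('a::field^2^2) monoid)"
proof (rule group.subgroupI[OF group_SL2])
  show "T \<subseteq> carrier SL2"
  proof
    fix A assume "A \<in> T"
    thus "A \<in> carrier SL2" using det by (cases A rule: mat2_cases) simp
  qed
  show "inv\<^bsub>SL2\<^esub> A \<in> T" if "A \<in> T" for A
    using that by (cases A rule: mat2_cases) (simp add: inv_SL2_mat2 det inv)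
  show "T \<noteq> {}" using one by blast
  show "A \<otimes>\<^bsub>SL2\<^esub> B \<in> T" if "A \<in> T" "B \<in> T" for A B
    using mult[OF that] by simp
qed

lemma uminus_mat_1_mult [simp]: "(- mat 1 :: 'a::field^2^2) ** A = - A"
  by (simp add: vec_eq_iff forall_2 matrix_matrix_mult_def sum_2 mat_def)

lemma mult_uminus_mat_1 [simp]: "A ** (- mat 1 :: 'a::field^2^2) = - A"
  by (simp add: vec_eq_iff forall_2 matrix_matrix_mult_def sum_2 mat_def)

definition proj :: "('a::field^2^2) \<Rightarrow> ('a^2^2) set" where
  "proj A = {mat 1, - mat 1} #>\<^bsub>SL2\<^esub> A"

lemma proj_eq: "proj A = {A, - A}"
  by (simp add: proj_def r_coset_def insert_commute)

lemma normal_center_SL2: "{mat 1, - mat 1} \<lhd> (SL2 :: ('a::field^2^2) monoid)"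
proof (rule group.normalI[OF group_SL2])
  show "subgroup {mat 1, - mat 1} (SL2 :: ('a^2^2) monoid)"
    by (rule SL2_subgroupI) (auto simp: mat_1_eq_mat2)
qed (simp add: r_coset_def l_coset_def)

lemma group_PSL2: "group (PSL2 :: ('a::field^2^2) set monoid)"
  unfolding PSL2_def by (rule normal.factorgroup_is_group[OF normal_center_SL2])

lemma group_hom_proj: "group_hom SL2 (PSL2 :: ('a::field^2^2) set monoid) proj"
  using normal.r_coset_hom_Mod[OF normal_center_SL2]
  by (simp add: group_hom_def group_hom_axioms_def group_SL2 group_PSL2[unfolded PSL2_def]
      PSL2_def proj_def[abs_def])

lemma carrier_PSL2: "carrier (PSL2 :: ('a::field^2^2) set monoid) = proj ` carrier SL2"
  by (auto simp: PSL2_def FactGroup_def RCOSETS_def proj_def)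

lemma one_PSL2: "\<one>\<^bsub>PSL2\<^esub> = proj (mat 1 :: 'a::field^2^2)"
  by (simp add: PSL2_def FactGroup_def proj_eq)

lemma proj_mem_image_iff:
  assumes "\<And>B. B \<in> T \<Longrightarrow> - B \<in> T"
  shows "proj A \<in> proj ` T \<longleftrightarrow> A \<in> T"
proof
  assume "proj A \<in> proj ` T"
  then obtain B where "B \<in> T" "proj A = proj B" by blast
  hence "A \<in> {B, - B}" by (metis insertI1 proj_eq)
  thus "A \<in> T" using assms \<open>B \<in> T\<close> by blast
qed (rule imageI)

section \<open>Generation by unitriangular and diagonal matrices\<close>

definition upper_unitri :: "'a::field \<Rightarrow> 'a^2^2" where "upper_unitri t = mat2 1 t 0 1"
definition lower_unitri :: "'a::field \<Rightarrow> 'a^2^2" where "lower_unitri t = mat2 1 0 t 1"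
definition diag2 :: "'a::field \<Rightarrow> 'a^2^2" where "diag2 e = mat2 e 0 0 (inverse e)"

lemma unitri_subgroup_contains_SL2:
  assumes H: "subgroup H (SL2 :: ('a::field^2^2) monoid)"
    and upper: "\<And>t. upper_unitri t \<in> H" and lower: "\<And>t. lower_unitri t \<in> H"
  shows "carrier SL2 \<subseteq> H"
proof
  have mult: "A ** B \<in> H" if "A \<in> H" "B \<in> H" for A B
    using subgroup.m_closed[OF H that] by simp
  have nonzero_corner: "mat2 a b c d \<in> H" if det: "a * d - b * c = 1" and c: "c \<noteq> 0" for a b c d
  proof -
    have "upper_unitri ((a - 1) / c) ** lower_unitri c ** upper_unitri ((d - 1) / c) = mat2 a b c d"
      using det c by (simp add: upper_unitri_def lower_unitri_def field_simps)
    thus ?thesis using mult upper lower by metis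
  qed
  fix A :: "'a^2^2" assume "A \<in> carrier SL2"
  then obtain a b c d where A: "A = mat2 a b c d" and det: "a * d - b * c = 1"
    by (cases A rule: mat2_cases) simp
  show "A \<in> H"
  proof (cases "c = 0")
    case True
    hence "a \<noteq> 0" using det by auto
    moreover have "lower_unitri 1 ** A = mat2 a b (a + c) (b + d)" by (simp add: A lower_unitri_def)
    moreover have "a * (b + d) - b * (a + c) = 1" using det by (simp add: algebra_simps)
    ultimately have "lower_unitri 1 ** A \<in> H" using nonzero_corner True by simp
    moreover have "lower_unitri (-1) ** (lower_unitri 1 ** A) = A"
      by (simp add: A lower_unitri_def)
    ultimately show ?thesis using mult lower by metis
  qed (use nonzero_corner det A in simp)
qed

lemma unitri_square_mem_subgroup_SL2:
  fixes H :: "('a::field^2^2) set"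
  assumes H: "subgroup H SL2"
    and upper: "upper_unitri 1 \<in> H" and lower: "lower_unitri 1 \<in> H"
    and diag: "\<And>e. e \<noteq> 0 \<Longrightarrow> diag2 e \<in> H"
  shows "upper_unitri (e\<^sup>2) \<in> H \<and> lower_unitri (e\<^sup>2) \<in> H"
proof (cases "e = 0")
  case True
  thus ?thesis using subgroup.one_closed[OF H]
    by (simp add: upper_unitri_def lower_unitri_def mat_1_eq_mat2)
next
  case False
  have "upper_unitri (e\<^sup>2) = diag2 e ** upper_unitri 1 ** diag2 (inverse e)"
    "lower_unitri (e\<^sup>2) = diag2 (inverse e) ** lower_unitri 1 ** diag2 e"
    using False by (simp_all add: diag2_def upper_unitri_def lower_unitri_def power2_eq_square)
  moreover have "diag2 e ** upper_unitri 1 ** diag2 (inverse e) \<in> H"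
    "diag2 (inverse e) ** lower_unitri 1 ** diag2 e \<in> H"
    using False upper lower subgroup.m_closed[OF H] by (simp_all add: diag)
  ultimately show ?thesis by simp
qed

lemma unitri_mem_subgroup_SL2:
  fixes H :: "('a::field^2^2) set"
  assumes two: "(2::'a) \<noteq> 0" and H: "subgroup H SL2"
    and upper: "upper_unitri 1 \<in> H" and lower: "lower_unitri 1 \<in> H"
    and diag: "\<And>e. e \<noteq> 0 \<Longrightarrow> diag2 e \<in> H"
  shows "upper_unitri t \<in> H \<and> lower_unitri t \<in> H"
proof -
  note squares = unitri_square_mem_subgroup_SL2[OF H upper lower diag]
  have neg_squares: "upper_unitri (- e\<^sup>2) \<in> H \<and> lower_unitri (- e\<^sup>2) \<in> H" for e
  proof -
    have "inv\<^bsub>SL2\<^esub> (upper_unitri (e\<^sup>2)) = upper_unitri (- e\<^sup>2)"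
      "inv\<^bsub>SL2\<^esub> (lower_unitri (e\<^sup>2)) = lower_unitri (- e\<^sup>2)"
      by (simp_all add: upper_unitri_def lower_unitri_def inv_SL2_mat2)
    moreover have "inv\<^bsub>SL2\<^esub> (upper_unitri (e\<^sup>2)) \<in> H" "inv\<^bsub>SL2\<^esub> (lower_unitri (e\<^sup>2)) \<in> H"
      using subgroup.m_inv_closed[OF H] squares[of e] by blast+
    ultimately show ?thesis by simp
  qed
  define u v where "u = (t + 1) / 2" and "v = (t - 1) / 2"
  have "t = u\<^sup>2 - v\<^sup>2" unfolding u_def v_def by (rule diff_squares_eq[OF two])
  hence "upper_unitri t = upper_unitri (u\<^sup>2) ** upper_unitri (- v\<^sup>2)"
    "lower_unitri t = lower_unitri (u\<^sup>2) ** lower_unitri (- v\<^sup>2)"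
    by (simp_all add: upper_unitri_def lower_unitri_def)
  moreover have "upper_unitri (u\<^sup>2) ** upper_unitri (- v\<^sup>2) \<in> H"
    "lower_unitri (u\<^sup>2) ** lower_unitri (- v\<^sup>2) \<in> H"
    using subgroup.m_closed[OF H] squares[of u] neg_squares[of v] by simp_all
  ultimately show ?thesis by (simp only:)
qed

lemma generate_SL2_unitri_diag:
  fixes w :: "'a::field"
  assumes two: "(2::'a) \<noteq> 0" and w: "w \<noteq> 0" and gen: "\<And>x. x \<noteq> 0 \<Longrightarrow> \<exists>n. x = w ^ n"
  shows "generate SL2 {upper_unitri 1, lower_unitri 1, diag2 w} = carrier SL2"
proof
  let ?S = "{upper_unitri 1, lower_unitri 1, diag2 w}"
  have S: "?S \<subseteq> carrier SL2" using w by (simp add: upper_unitri_def lower_unitri_def diag2_def)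
  show "generate SL2 ?S \<subseteq> carrier SL2" using S by (rule group.generate_incl[OF group_SL2])
  have H: "subgroup (generate SL2 ?S) SL2" using S by (rule group.generate_is_subgroup[OF group_SL2])
  have "diag2 (w ^ n) \<in> generate SL2 ?S" for n
  proof (induction n)
    case 0
    thus ?case using subgroup.one_closed[OF H] by (simp add: diag2_def mat_1_eq_mat2)
  next
    case (Suc n)
    have "diag2 (w ^ Suc n) = diag2 w \<otimes>\<^bsub>SL2\<^esub> diag2 (w ^ n)"
      by (simp add: diag2_def inverse_mult_distrib)
    thus ?case using subgroup.m_closed[OF H generate.incl Suc] by simp
  qed
  hence "diag2 e \<in> generate SL2 ?S" if "e \<noteq> 0" for e using gen[OF that] by blast
  hence "upper_unitri t \<in> generate SL2 ?S \<and> lower_unitri t \<in> generate SL2 ?S" for t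
    using unitri_mem_subgroup_SL2[OF two H] generate.incl[of _ ?S SL2] by simp
  thus "carrier SL2 \<subseteq> generate SL2 ?S" using unitri_subgroup_contains_SL2[OF H] by blast
qed

lemma generate_PSL2_unitri_diag:
  fixes w :: "'a::field"
  assumes "(2::'a) \<noteq> 0" "w \<noteq> 0" "\<And>x. x \<noteq> 0 \<Longrightarrow> \<exists>n. x = w ^ n"
  shows "generate PSL2 {proj (upper_unitri 1), proj (lower_unitri 1), proj (diag2 w)} = carrier PSL2"
proof -
  have "{upper_unitri 1, lower_unitri 1, diag2 w} \<subseteq> carrier SL2"
    using assms(2) by (simp add: upper_unitri_def lower_unitri_def diag2_def)
  from group_hom.generate_img[OF group_hom_proj this]
  show ?thesis by (simp add: generate_SL2_unitri_diag[OF assms] carrier_PSL2)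
qed

section \<open>Three subgroups of SL(2)\<close>

definition lower_triangular_SL2 :: "('a::field^2^2) set" where
  "lower_triangular_SL2 = {A. det A = 1 \<and> A$1$2 = 0}"

definition upper_triangular_SL2 :: "('a::field^2^2) set" where
  "upper_triangular_SL2 = {A. det A = 1 \<and> A$2$1 = 0}"

(* Over a field of characteristic p, \<int> is the prime field GF(p). *)
definition Ints_scaled_SL2 :: "('a::field^2^2) set" where
  "Ints_scaled_SL2 = {A. det A = 1 \<and> (\<exists>k. k \<noteq> 0 \<and> (\<forall>i j. k * A$i$j \<in> \<int>))}"

lemma mat2_in_Ints_scaled_SL2_iff:
  "mat2 a b c d \<in> Ints_scaled_SL2 \<longleftrightarrow>
     a * d - b * c = 1 \<and> (\<exists>k. k \<noteq> 0 \<and> k * a \<in> \<int> \<and> k * b \<in> \<int> \<and> k * c \<in> \<int> \<and> k * d \<in> \<int>)"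
  by (simp add: Ints_scaled_SL2_def forall_2 conj_ac)

lemma mat2_in_Ints_scaled_SL2I:
  "a * d - b * c = 1 \<Longrightarrow> a \<in> \<int> \<Longrightarrow> b \<in> \<int> \<Longrightarrow> c \<in> \<int> \<Longrightarrow> d \<in> \<int> \<Longrightarrow>
    mat2 a b c d \<in> Ints_scaled_SL2"
  unfolding mat2_in_Ints_scaled_SL2_iff by (intro conjI exI[of _ 1]) simp_all

lemma subgroup_lower_triangular_SL2: "subgroup lower_triangular_SL2 (SL2 :: ('a::field^2^2) monoid)"
proof (rule SL2_subgroupI)
  show "A ** B \<in> lower_triangular_SL2"
    if "A \<in> lower_triangular_SL2" "B \<in> lower_triangular_SL2" for A B :: "'a^2^2"
    using that by (simp add: lower_triangular_SL2_def det_mul) (simp add: matrix_matrix_mult_def sum_2)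
qed (simp_all add: lower_triangular_SL2_def mult.commute)

lemma subgroup_upper_triangular_SL2: "subgroup upper_triangular_SL2 (SL2 :: ('a::field^2^2) monoid)"
proof (rule SL2_subgroupI)
  show "A ** B \<in> upper_triangular_SL2"
    if "A \<in> upper_triangular_SL2" "B \<in> upper_triangular_SL2" for A B :: "'a^2^2"
    using that by (simp add: upper_triangular_SL2_def det_mul) (simp add: matrix_matrix_mult_def sum_2)
qed (simp_all add: upper_triangular_SL2_def mult.commute)

lemma subgroup_Ints_scaled_SL2: "subgroup Ints_scaled_SL2 (SL2 :: ('a::field^2^2) monoid)"
proof (rule SL2_subgroupI)
  show "mat2 1 0 0 1 \<in> (Ints_scaled_SL2 :: ('a^2^2) set)"
    by (rule mat2_in_Ints_scaled_SL2I) simp_all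
  show "mat2 d (-b) (-c) a \<in> Ints_scaled_SL2" if "mat2 a b c d \<in> Ints_scaled_SL2" for a b c d :: 'a
  proof -
    from that obtain k where det: "a * d - b * c = 1" and k: "k \<noteq> 0"
      "k * a \<in> \<int>" "k * b \<in> \<int>" "k * c \<in> \<int>" "k * d \<in> \<int>"
      unfolding mat2_in_Ints_scaled_SL2_iff by blast
    have "d * a - (- b) * (- c) = 1" using det by (simp only: minus_mult_minus mult.commute)
    moreover have "k * (- b) \<in> \<int>" "k * (- c) \<in> \<int>" using k by simp_all
    ultimately show ?thesis using k unfolding mat2_in_Ints_scaled_SL2_iff by blast
  qed
  show "A ** B \<in> Ints_scaled_SL2" if A: "A \<in> Ints_scaled_SL2" and B: "B \<in> Ints_scaled_SL2" for A B :: "'a^2^2"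
  proof -
    obtain k where k: "k \<noteq> 0" "\<forall>i j. k * A$i$j \<in> \<int>"
      using A by (auto simp: Ints_scaled_SL2_def)
    obtain l where l: "l \<noteq> 0" "\<forall>i j. l * B$i$j \<in> \<int>"
      using B by (auto simp: Ints_scaled_SL2_def)
    have "(k * l) * (A ** B)$i$j = (\<Sum>m\<in>UNIV. (k * A$i$m) * (l * B$m$j))" for i j
      by (simp add: matrix_matrix_mult_def sum_distrib_left mult_ac)
    moreover have "(\<Sum>m\<in>UNIV. (k * A$i$m) * (l * B$m$j)) \<in> \<int>" for i j
      by (rule Ints_sum, rule Ints_mult) (simp_all add: k(2) l(2))
    ultimately have "\<forall>i j. (k * l) * (A ** B)$i$j \<in> \<int>" by simp
    moreover have "k * l \<noteq> 0" using k(1) l(1) by simp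
    moreover have "det (A ** B) = 1" using A B by (simp add: Ints_scaled_SL2_def det_mul)
    ultimately show ?thesis unfolding Ints_scaled_SL2_def by blast
  qed
qed (simp add: mat2_in_Ints_scaled_SL2_iff)

lemma uminus_mem_lower_triangular_SL2: "A \<in> lower_triangular_SL2 \<Longrightarrow> - A \<in> lower_triangular_SL2"
  by (cases A rule: mat2_cases) (simp add: lower_triangular_SL2_def)

lemma uminus_mem_upper_triangular_SL2: "A \<in> upper_triangular_SL2 \<Longrightarrow> - A \<in> upper_triangular_SL2"
  by (cases A rule: mat2_cases) (simp add: upper_triangular_SL2_def)

lemma uminus_mem_Ints_scaled_SL2: "A \<in> Ints_scaled_SL2 \<Longrightarrow> - A \<in> Ints_scaled_SL2"
  by (cases A rule: mat2_cases) (auto simp: mat2_in_Ints_scaled_SL2_iff)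

lemma diag2_notin_Ints_scaled_SL2:
  fixes w :: "'a::{field,finite}"
  assumes two: "(2::'a) \<noteq> 0" and Ints: "(\<int> :: 'a set) \<noteq> UNIV"
    and w: "w \<noteq> 0" and gen: "\<And>x. x \<noteq> 0 \<Longrightarrow> \<exists>n. x = w ^ n"
  shows "diag2 w \<notin> Ints_scaled_SL2"
proof
  assume "diag2 w \<in> Ints_scaled_SL2"
  then obtain k where k: "k \<noteq> 0" "k * w \<in> \<int>" "k * inverse w \<in> \<int>"
    by (auto simp: diag2_def mat2_in_Ints_scaled_SL2_iff)
  have "(k * w) * inverse (k * inverse w) \<in> \<int>" using k Ints_inverse Ints_mult by blast
  moreover have "(k * w) * inverse (k * inverse w) = w\<^sup>2"
    using k w by (simp add: power2_eq_square field_simps)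
  ultimately have "w\<^sup>2 \<in> \<int>" by (simp only:)
  have "x\<^sup>2 \<in> \<int>" for x :: 'a
  proof (cases "x = 0")
    case False
    then obtain n where "x = w ^ n" using gen by blast
    hence "x\<^sup>2 = (w\<^sup>2) ^ n" by (simp flip: power_mult add: mult.commute)
    thus ?thesis using \<open>w\<^sup>2 \<in> \<int>\<close> by simp
  qed simp
  thus False using Ints Ints_eq_UNIV_if_squares[OF two] by blast
qed

section \<open>The sequence (x, y, h)\<close>

lemma diag2_mem_if_sqrt_minus_one:
  assumes "i * i = (-1::'a::field)"
  shows "diag2 i \<in> lower_triangular_SL2" "diag2 i \<in> upper_triangular_SL2" "diag2 i \<in> Ints_scaled_SL2"
proof -
  have i0: "i \<noteq> 0" using assms by auto
  thus "diag2 i \<in> lower_triangular_SL2" "diag2 i \<in> upper_triangular_SL2"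
    by (simp_all add: diag2_def lower_triangular_SL2_def upper_triangular_SL2_def)
  show "diag2 i \<in> Ints_scaled_SL2"
    unfolding diag2_def mat2_in_Ints_scaled_SL2_iff using assms i0
    by (intro conjI exI[of _ i]) simp_all
qed

lemma proj_diag2_eq_one_iff: "proj (diag2 e) = \<one>\<^bsub>PSL2\<^esub> \<longleftrightarrow> e = 1 \<or> e = (-1::'a::field)"
proof
  assume "proj (diag2 e) = \<one>\<^bsub>PSL2\<^esub>"
  hence "diag2 e \<in> {mat 1, - mat 1}" by (metis one_PSL2 proj_eq insertI1)
  thus "e = 1 \<or> e = -1" by (auto simp: diag2_def mat_1_eq_mat2)
qed (auto simp: one_PSL2 proj_eq diag2_def mat_1_eq_mat2)

lemma separating_subgroups_unitri_diag:
  fixes w :: "'a::{field,finite}"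
  assumes two: "(2::'a) \<noteq> 0" and Ints: "(\<int> :: 'a set) \<noteq> UNIV"
    and w: "w \<noteq> 0" and gen: "\<And>x. x \<noteq> 0 \<Longrightarrow> \<exists>n. x = w ^ n"
  shows "separating_subgroups PSL2 [proj (upper_unitri 1), proj (lower_unitri 1), proj (diag2 w)]
    (\<lambda>k. proj ` ([lower_triangular_SL2, upper_triangular_SL2, Ints_scaled_SL2] ! k))"
    (is "separating_subgroups PSL2 ?s _")
proof -
  define M where "M = [upper_unitri 1, lower_unitri 1, diag2 w]"
  define T where "T = [lower_triangular_SL2, upper_triangular_SL2, Ints_scaled_SL2 :: ('a^2^2) set]"
  have less_3: "k < 3 \<longleftrightarrow> k = 0 \<or> k = 1 \<or> k = 2" for k :: nat by auto
  have "?s = map proj M" "length M = 3" by (simp_all add: M_def)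
  hence s_nth: "?s ! j = proj (M ! j)" if "j < 3" for j using that by simp
  have upper: "upper_unitri 1 \<notin> lower_triangular_SL2" "upper_unitri 1 \<in> upper_triangular_SL2"
    "upper_unitri (1::'a) \<in> Ints_scaled_SL2"
    by (simp_all add: upper_unitri_def lower_triangular_SL2_def upper_triangular_SL2_def
        mat2_in_Ints_scaled_SL2I)
  have lower: "lower_unitri 1 \<in> lower_triangular_SL2" "lower_unitri 1 \<notin> upper_triangular_SL2"
    "lower_unitri (1::'a) \<in> Ints_scaled_SL2"
    by (simp_all add: lower_unitri_def lower_triangular_SL2_def upper_triangular_SL2_def
        mat2_in_Ints_scaled_SL2I)
  have diag: "diag2 w \<in> lower_triangular_SL2" "diag2 w \<in> upper_triangular_SL2"
    using w by (simp_all add: diag2_def lower_triangular_SL2_def upper_triangular_SL2_def)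
  have M_in_T: "M ! j \<in> T ! k \<longleftrightarrow> j \<noteq> k" if "j < 3" "k < 3" for j k
    using that upper lower diag diag2_notin_Ints_scaled_SL2[OF two Ints w gen]
    unfolding less_3 by (auto simp: M_def T_def)
  have T_subgroup: "subgroup (T ! k) SL2" if "k < 3" for k
    using that subgroup_lower_triangular_SL2 subgroup_upper_triangular_SL2 subgroup_Ints_scaled_SL2
    unfolding less_3 by (auto simp: T_def)
  have T_uminus: "\<And>B. B \<in> T ! k \<Longrightarrow> - B \<in> T ! k" if "k < 3" for k
    using that uminus_mem_lower_triangular_SL2 uminus_mem_upper_triangular_SL2
      uminus_mem_Ints_scaled_SL2
    unfolding less_3 by (auto simp: T_def)
  show ?thesis
    unfolding separating_subgroups_def T_def[symmetric]
  proof (intro allI impI)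
    fix k assume "k < length ?s"
    hence k: "k < 3" by simp
    have "subgroup (proj ` (T ! k)) PSL2"
      by (rule group_hom.subgroup_img_is_subgroup[OF group_hom_proj T_subgroup[OF k]])
    moreover have "?s ! k \<notin> proj ` (T ! k)"
      "\<forall>j < length ?s. j \<noteq> k \<longrightarrow> ?s ! j \<in> proj ` (T ! k)"
      using M_in_T k by (simp_all add: s_nth proj_mem_image_iff[OF T_uminus[OF k]])
    ultimately show "subgroup (proj ` (T ! k)) PSL2 \<and> ?s ! k \<notin> proj ` (T ! k) \<and>
        (\<forall>j < length ?s. j \<noteq> k \<longrightarrow> ?s ! j \<in> proj ` (T ! k))"
      by blast
  qed
qed

lemma PSL2_unitri_diag_seq:
  fixes w i :: "'a::{field,finite}"
  assumes two: "(2::'a) \<noteq> 0" and Ints: "(\<int> :: 'a set) \<noteq> UNIV"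
    and w: "w \<noteq> 0" and gen: "\<And>x. x \<noteq> 0 \<Longrightarrow> \<exists>n. x = w ^ n" and i: "i * i = -1"
  defines "s \<equiv> [proj (upper_unitri 1), proj (lower_unitri 1), proj (diag2 w)]"
  shows "irredundant_gen_seq PSL2 s" and "\<not> seq_replacement PSL2 s"
proof -
  note separating = separating_subgroups_unitri_diag[OF two Ints w gen, folded s_def]
  have carrier: "set s \<subseteq> carrier PSL2"
    using w by (auto simp: s_def carrier_PSL2 upper_unitri_def lower_unitri_def diag2_def)
  have generate: "generate PSL2 (set s) = carrier PSL2"
    using generate_PSL2_unitri_diag[OF two w gen] by (simp add: s_def)
  show "irredundant_gen_seq PSL2 s"
    by (rule irredundant_gen_seqI[OF group_PSL2 carrier generate separating])
  have "i \<noteq> 0" using i by auto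
  hence "proj (diag2 i) \<in> carrier PSL2" by (auto simp: carrier_PSL2 diag2_def)
  moreover have "proj (diag2 i) \<noteq> \<one>\<^bsub>PSL2\<^esub>"
    using i two by (auto simp: proj_diag2_eq_one_iff)
  moreover have "proj (diag2 i) \<in> proj ` ([lower_triangular_SL2, upper_triangular_SL2, Ints_scaled_SL2] ! k)"
    if "k < length s" for k
    using that diag2_mem_if_sqrt_minus_one[OF i] by (auto simp: s_def less_Suc_eq)
  ultimately show "\<not> seq_replacement PSL2 s"
    using not_seq_replacementI[OF group_PSL2 carrier separating] by blast
qed

theorem theorem2p6:
  fixes p :: nat
  assumes "Factorial_Ring.prime p"
    and "p mod 10 = 3 \<or> p mod 10 = 7"
    and "CARD('a::{field,finite}) = p ^ 2"
    and "max_irr_len (PSL2 :: ('a ^ 2 ^ 2) set monoid) = 3"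
  shows "\<not> replacement_property (PSL2 :: ('a ^ 2 ^ 2) set monoid)"
proof -
  have p_odd: "odd p" using assms(2) by presburger
  have "CHAR('a) = p" using CHAR_eq_prime_of_card[OF assms(3,1)] by simp
  hence two: "(2::'a) \<noteq> 0" using p_odd by (simp add: two_ne_zero_if_odd_CHAR)
  have Ints: "(\<int> :: 'a set) \<noteq> UNIV" by (rule Ints_ne_UNIV_if_card_prime_square[OF assms(3,1)])
  obtain w :: 'a where w: "w \<noteq> 0" "\<And>x. x \<noteq> 0 \<Longrightarrow> \<exists>n. x = w ^ n"
    by (metis finite_field_generator)
  have "4 dvd CARD('a) - 1" using four_dvd_square_minus_one[OF p_odd] assms(3) by simp
  then obtain i :: 'a where i: "i * i = -1" by (rule finite_field_sqrt_minus_one)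
  let ?s = "[proj (upper_unitri 1), proj (lower_unitri 1), proj (diag2 w)]"
  have "irredundant_gen_seq PSL2 ?s" "\<not> seq_replacement PSL2 ?s"
    using PSL2_unitri_diag_seq[OF two Ints w i] by blast+
  moreover have "length ?s = max_irr_len (PSL2 :: ('a ^ 2 ^ 2) set monoid)" using assms(4) by simp
  ultimately show ?thesis unfolding replacement_property_def by blast
qed

end
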